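(* For every target rate $r>0$, $P_{\rm r}>0$ and $\mathcal C_x\in[0,1)$, writing $\beta=\frac{\Psi_r(\mathcal C_x)}{P_{\rm r}\theta_{\rm rd}(1-\mathcal C_x^2)}$, \[ \mathcal P_{\rm rd}(P_{\rm r},\mathcal C_x)=1-\frac{e^{-\beta}}{\Gamma(m_{\rm sd})\theta_{\rm sd}^{m_{\rm sd}}}\sum_{m=0}^{m_{\rm rd}-1}\sum_{k=0}^m\binom{m}{k}\frac{P_{\rm s}^k\,\Gamma(k+m_{\rm sd})\,\beta^m}{\Gamma(m+1)\left(P_{\rm s}\beta+\frac1{\theta_{\rm sd}}\right)^{k+m_{\rm sd}}}. \]
   Context: Let $P_{\rm s}>0$, $P_{\rm r}>0$ be the source and relay transmit powers. For links $ij\in\{\mathrm{rd},\mathrm{sd}\}$ let $g_{ij}$ be independent random channel gains, $g_{ij}$ gamma distributed with integer shape parameter $m_{ij}\ge1$ and scale $\theta_{ij}=\pi_{ij}/m_{ij}$, $\pi_{ij}=\mathbb E[g_{ij}]>0$; i.e. density $x^{m_{ij}-1}e^{-x/\theta_{ij}}/(\Gamma(m_{ij})\theta_{ij}^{m_{ij}})$, $x\ge0$. For $\mathcal C_x\in[0,1)$ define $R_{\rm rd}(P_{\rm r},\mathcal C_x)=\tfrac12\log_2\frac{(P_{\rm r}g_{\rm rd}+P_{\rm s}g_{\rm sd}+1)^2-(P_{\rm r}g_{\rm rd}\mathcal C_x)^2}{(P_{\rm s}g_{\rm sd}+1)^2}$. For a target rate $r>0$ put $\gamma=2^{2r}-1$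 and $\Psi_r(x)=\sqrt{1+\gamma(1-x^2)}-1$. The R–D outage probability is $\mathcal P_{\rm rd}=\mathbb P\{R_{\rm rd}<r\}$. *)

theory Defs
  imports "HOL-Probability.Probability"
begin

definition gamma_density :: "nat \<Rightarrow> real \<Rightarrow> real \<Rightarrow> real" where
  "gamma_density m \<theta> x =
     (if 0 \<le> x then x ^ (m - 1) * exp (- x / \<theta>) / (Gamma (real m) * \<theta> ^ m) else 0)"

definition R_rd :: "real \<Rightarrow> real \<Rightarrow> real \<Rightarrow> real \<Rightarrow> real \<Rightarrow> real" where
  "R_rd P_s P_r C_x g_rd g_sd =
     1/2 * log 2 (((P_r * g_rd + P_s * g_sd + 1)^2 - (P_r * g_rd * C_x)^2) / (P_s * g_sd + 1)^2)"

definition gamma_r :: "real \<Rightarrow> real" where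
  "gamma_r r = 2 powr (2 * r) - 1"

definition Psi :: "real \<Rightarrow> real \<Rightarrow> real" where
  "Psi r x = sqrt (1 + gamma_r r * (1 - x^2)) - 1"

end

theory Submission
  imports Defs
begin

text \<open>
  For nonnegative gains, \<open>R_rd < r\<close> is a quadratic inequality in \<open>P_r g_rd / (P_s g_sd + 1)\<close>
  whose positive root is \<open>\<Psi>_r(C_x) / (1 - C_x\<^sup>2)\<close>; so there is no outage exactly
  when \<open>g_rd \<ge> T(g_sd)\<close> for an affine threshold \<open>T\<close>. Gamma laws with integer shape are Erlang laws,
  whose tail at \<open>T\<close> is a Poisson distribution function in \<open>T / \<theta>_rd\<close>. Averaging this tail over
  the independent \<open>g_sd\<close>, the binomial expansion of the powers of \<open>T(g_sd)\<close> leaves Erlang moments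
  of \<open>g_sd\<close> with the rate shifted by \<open>P_s \<beta>\<close>, which gives the finite double sum.
\<close>

definition poisson_cdf :: "nat \<Rightarrow> real \<Rightarrow> real" where
  "poisson_cdf k \<mu> = (\<Sum>n\<le>k. \<mu> ^ n * exp (- \<mu>) / fact n)"

lemma poisson_cdf_nonneg: "0 \<le> \<mu> \<Longrightarrow> 0 \<le> poisson_cdf k \<mu>"
  unfolding poisson_cdf_def by (intro sum_nonneg) auto

lemma Gamma_real_Suc: "Gamma (real (Suc n)) = fact n"
  using Gamma_fact[of n] by (simp add: add.commute)

lemma gamma_density_eq_erlang_density:
  "gamma_density (Suc k) \<theta> = erlang_density k (1 / \<theta>)"
  by (auto simp: fun_eq_iff gamma_density_def erlang_density_def Gamma_fact power_divide field_simps)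

lemma gamma_r_pos: "0 < r \<Longrightarrow> 0 < gamma_r r"
  unfolding gamma_r_def using powr_less_mono[of 0 "2 * r" "2::real"] by simp

lemma Psi_pos:
  assumes "0 < r" "0 \<le> C" "C < 1"
  shows "0 < Psi r C"
proof -
  have "C^2 < 1" using assms by (simp add: power_less_one_iff abs_square_less_1)
  then show ?thesis using gamma_r_pos[OF assms(1)] by (simp add: Psi_def)
qed

lemma quadratic_less_iff_below_root:
  fixes u D g :: real
  assumes "0 < D" "0 \<le> u" "0 \<le> g"
  shows "D * u^2 + 2 * u < g \<longleftrightarrow> u < (sqrt (1 + g * D) - 1) / D"
proof -
  have "u < (sqrt (1 + g * D) - 1) / D \<longleftrightarrow> D * u + 1 < sqrt (1 + g * D)"
    using assms by (simp add: field_simps)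
  also have "\<dots> \<longleftrightarrow> sqrt ((D * u + 1)^2) < sqrt (1 + g * D)"
    using assms by simp
  also have "\<dots> \<longleftrightarrow> (D * u + 1)^2 < 1 + g * D"
    by (rule real_sqrt_less_iff)
  also have "\<dots> \<longleftrightarrow> D * (D * u^2 + 2 * u) < D * g"
    by (simp add: power2_eq_square algebra_simps)
  finally show ?thesis using assms by simp
qed

lemma R_rd_less_iff:
  fixes x y P_s P_r C r :: real
  assumes "0 \<le> x" "0 \<le> y" "0 < P_s" "0 < P_r" "0 \<le> C" "C < 1" "0 < r"
  shows "R_rd P_s P_r C x y < r \<longleftrightarrow> x < (P_s * y + 1) * Psi r C / (P_r * (1 - C^2))"
proof -
  define b where "b = P_s * y + 1"
  define u where "u = P_r * x / b"
  define D where "D = 1 - C^2"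
  have b: "0 < b" using assms by (simp add: b_def add_nonneg_pos)
  have u: "0 \<le> u" using assms b by (simp add: u_def)
  have D: "0 < D" using assms by (simp add: D_def power_less_one_iff abs_square_less_1)
  have "P_r * x = u * b" using b by (simp add: u_def)
  then have "(P_r * x + P_s * y + 1)^2 - (P_r * x * C)^2 = b^2 * (1 + (D * u^2 + 2 * u))"
    by (simp add: b_def D_def power2_eq_square algebra_simps)
  then have ratio: "((P_r * x + P_s * y + 1)^2 - (P_r * x * C)^2) / (P_s * y + 1)^2 = 1 + (D * u^2 + 2 * u)"
    using b by (simp add: b_def[symmetric])
  have "R_rd P_s P_r C x y < r \<longleftrightarrow> log 2 (1 + (D * u^2 + 2 * u)) < 2 * r"
    unfolding R_rd_def ratio by linarith
  also have "\<dots> \<longleftrightarrow> 1 + (D * u^2 + 2 * u) < 2 powr (2 * r)"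
    using D u by (subst log_less_iff) (auto intro: add_pos_nonneg)
  also have "\<dots> \<longleftrightarrow> D * u^2 + 2 * u < gamma_r r"
    unfolding gamma_r_def by linarith
  also have "\<dots> \<longleftrightarrow> u < Psi r C / D"
    using quadratic_less_iff_below_root[OF D u less_imp_le[OF gamma_r_pos[OF assms(7)]]]
    by (simp add: Psi_def D_def)
  also have "\<dots> \<longleftrightarrow> x < b * Psi r C / (P_r * D)"
    using b D assms by (simp add: u_def field_simps)
  finally show ?thesis by (simp add: b_def D_def)
qed

lemma nn_integral_erlang_density_atLeast:
  fixes l T :: real
  assumes l: "0 < l" and T: "0 \<le> T"
  shows "(\<integral>\<^sup>+x. ennreal (erlang_density k l x) * indicator {T..} x \<partial>lborel) = poisson_cdf k (l * T)"
proof -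
  let ?f = "\<lambda>x. ennreal (erlang_density k l x)"
  have "(\<integral>\<^sup>+x. ?f x * indicator {..<T} x \<partial>lborel) = (\<integral>\<^sup>+x. ?f x * indicator {..T} x \<partial>lborel)"
    by (intro nn_integral_cong_AE eventually_mono[OF AE_lborel_singleton[of T]])
       (auto split: split_indicator)
  also have "\<dots> = ennreal (1 - poisson_cdf k (l * T))"
    using T by (simp add: nn_integral_erlang_density[OF l] erlang_CDF_def poisson_cdf_def)
  finally have below: "(\<integral>\<^sup>+x. ?f x * indicator {..<T} x \<partial>lborel) = ennreal (1 - poisson_cdf k (l * T))" .
  have "(\<integral>\<^sup>+x. ?f x * indicator {..<T} x \<partial>lborel) + (\<integral>\<^sup>+x. ?f x * indicator {T..} x \<partial>lborel)
      = (\<integral>\<^sup>+x. ?f x \<partial>lborel)"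
    by (subst nn_integral_add[symmetric]) (auto intro!: nn_integral_cong split: split_indicator)
  also have "\<dots> = 1"
    using nn_integral_erlang_ith_moment[OF l, of k 0] by simp
  finally have "ennreal (1 - poisson_cdf k (l * T)) + (\<integral>\<^sup>+x. ?f x * indicator {T..} x \<partial>lborel)
      = ennreal (1 - poisson_cdf k (l * T)) + ennreal (poisson_cdf k (l * T))"
    using below poisson_cdf_nonneg[of "l * T" k] erlang_CDF_nonneg[OF l, of k T] l T
    by (simp add: erlang_CDF_def poisson_cdf_def ennreal_plus[symmetric] del: ennreal_plus)
  then show ?thesis by (simp add: ennreal_add_left_cancel)
qed

text \<open>The factor \<open>exp (- b c y)\<close> of the Poisson term shifts the Erlang rate from \<open>l\<close> to \<open>l + b c\<close>.\<close>

lemma erlang_density_mult_poisson_cdf: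
  fixes l b c y :: real
  assumes "0 < l" "0 \<le> b" "0 \<le> c"
  defines "L \<equiv> l + b * c"
  shows "erlang_density k l y * poisson_cdf n (b * (c * y + 1))
       = (\<Sum>m\<le>n. \<Sum>j\<le>m. (real (m choose j) * c^j * b^m * exp (- b) * (l / L)^Suc k / fact m)
            * (erlang_density k L y * y^j))"
proof (cases "y < 0")
  case True then show ?thesis by (simp add: erlang_density_def)
next
  case False
  have L: "0 < L" using assms by (simp add: L_def add_pos_nonneg)
  have "erlang_density k l y * exp (- (b * (c * y + 1)))
      = l^Suc k * y^k * (exp (- (l * y)) * exp (- (b * (c * y + 1)))) / fact k"
    using False by (simp add: erlang_density_def)
  also have "\<dots> = l^Suc k * y^k * (exp (- b) * exp (- (L * y))) / fact k"
    by (simp add: L_def exp_add[symmetric] algebra_simps)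
  also have "\<dots> = (l / L)^Suc k * exp (- b) * erlang_density k L y"
    using False L by (simp add: erlang_density_def power_divide field_simps)
  finally have shift: "erlang_density k l y * exp (- (b * (c * y + 1)))
      = (l / L)^Suc k * exp (- b) * erlang_density k L y" .
  have binomial: "(b * (c * y + 1))^m = (\<Sum>j\<le>m. real (m choose j) * b^m * c^j * y^j)" for m
  proof -
    have "(b * (c * y + 1))^m = b^m * (\<Sum>j\<le>m. real (m choose j) * (c * y)^j * 1^(m - j))"
      by (simp only: power_mult_distrib binomial_ring)
    then show ?thesis by (simp add: sum_distrib_left power_mult_distrib ac_simps)
  qed
  have "erlang_density k l y * poisson_cdf n (b * (c * y + 1))
      = (\<Sum>m\<le>n. (b * (c * y + 1))^m / fact m * (erlang_density k l y * exp (- (b * (c * y + 1)))))"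
    by (simp add: poisson_cdf_def sum_distrib_left ac_simps)
  also have "\<dots> = (\<Sum>m\<le>n. (b * (c * y + 1))^m / fact m * ((l / L)^Suc k * exp (- b) * erlang_density k L y))"
    by (simp only: shift)
  finally show ?thesis
    unfolding binomial by (simp add: sum_distrib_left sum_divide_distrib sum_distrib_right ac_simps)
qed

lemma nn_integral_erlang_density_poisson_cdf:
  fixes l b c :: real
  assumes l: "0 < l" and b: "0 \<le> b" and c: "0 \<le> c"
  shows "(\<integral>\<^sup>+y. ennreal (erlang_density k l y * poisson_cdf n (b * (c * y + 1))) \<partial>lborel)
       = ennreal (exp (- b) * l^Suc k / fact k *
           (\<Sum>m\<le>n. \<Sum>j\<le>m. real (m choose j) * c^j * fact (k + j) * b^m / (fact m * (c * b + l)^(j + Suc k))))"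
proof -
  define L where "L = l + b * c"
  define a where "a m j = real (m choose j) * c^j * b^m * exp (- b) * (l / L)^Suc k / fact m" for m j
  have L: "0 < L" using l b c by (simp add: L_def add_pos_nonneg)
  have a: "0 \<le> a m j" for m j using l b c L by (simp add: a_def)
  have moment: "0 \<le> erlang_density k L y * y^j" for y j
    using L by (cases "y < 0") (auto simp: erlang_density_def)
  have pointwise: "erlang_density k l y * poisson_cdf n (b * (c * y + 1))
      = (\<Sum>m\<le>n. \<Sum>j\<le>m. a m j * (erlang_density k L y * y^j))" for y
    unfolding a_def L_def by (rule erlang_density_mult_poisson_cdf[OF l b c])
  have "(\<integral>\<^sup>+y. ennreal (erlang_density k l y * poisson_cdf n (b * (c * y + 1))) \<partial>lborel)
      = (\<integral>\<^sup>+y. (\<Sum>m\<le>n. \<Sum>j\<le>m. ennreal (a m j) * ennreal (erlang_density k L y * y^j)) \<partial>lborel)"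
    using a moment mult_nonneg_nonneg[OF a moment]
    by (intro nn_integral_cong) (simp add: pointwise ennreal_mult[symmetric] sum_nonneg)
  also have "\<dots> = (\<Sum>m\<le>n. \<Sum>j\<le>m. ennreal (a m j) * (\<integral>\<^sup>+y. ennreal (erlang_density k L y * y^j) \<partial>lborel))"
    by (simp add: nn_integral_sum nn_integral_cmult)
  also have "\<dots> = ennreal (\<Sum>m\<le>n. \<Sum>j\<le>m. a m j * (fact (k + j) / (fact k * L^j)))"
    using a L by (simp add: nn_integral_erlang_ith_moment ennreal_mult[symmetric] sum_nonneg)
  also have "(\<Sum>m\<le>n. \<Sum>j\<le>m. a m j * (fact (k + j) / (fact k * L^j)))
      = exp (- b) * l^Suc k / fact k *
          (\<Sum>m\<le>n. \<Sum>j\<le>m. real (m choose j) * c^j * fact (k + j) * b^m / (fact m * (c * b + l)^(j + Suc k)))"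
    unfolding sum_distrib_left
    using L by (intro sum.cong refl) (simp add: a_def L_def power_add power_divide field_simps)
  finally show ?thesis .
qed

lemma (in prob_space) indep_var_lborel_iff_borel:
  "indep_var lborel X lborel Y \<longleftrightarrow> indep_var borel X borel Y"
proof -
  have sets_eq: "sets (case_bool lborel lborel i) = sets (case_bool borel borel i)" for i
    by (simp split: bool.split)
  then have measurable_eq: "measurable M (case_bool lborel lborel i) = measurable M (case_bool borel borel i)" for i
    by (rule measurable_cong_sets[OF refl])
  show ?thesis
    unfolding indep_var_def indep_vars_def2 by (simp only: sets_eq measurable_eq)
qed

lemma (in prob_space) emeasure_indep_distributed_pair:
  fixes X Y :: "'a \<Rightarrow> real"
  assumes X: "distributed M lborel X f" and Y: "distributed M lborel Y g"
    and indep: "indep_var borel X borel Y"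
    and S: "S \<in> sets (borel \<Otimes>\<^sub>M borel)"
  shows "emeasure M {\<omega> \<in> space M. (X \<omega>, Y \<omega>) \<in> S}
       = (\<integral>\<^sup>+y. g y * (\<integral>\<^sup>+x. f x * indicator S (x, y) \<partial>lborel) \<partial>lborel)"
proof -
  have XY: "distributed M (lborel \<Otimes>\<^sub>M lborel) (\<lambda>\<omega>. (X \<omega>, Y \<omega>)) (\<lambda>(x, y). f x * g y)"
    using indep unfolding indep_var_lborel_iff_borel[symmetric]
    by (intro distributed_joint_indep[OF _ _ X Y]) (simp_all add: lborel.sigma_finite_measure_axioms)
  have [measurable]: "f \<in> borel_measurable borel" "g \<in> borel_measurable borel"
    using X Y by (auto simp: distributed_def)
  have [measurable]: "S \<in> sets (lborel \<Otimes>\<^sub>M lborel)"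
    using S unfolding sets_pair_measure_cong[OF sets_lborel sets_lborel] .
  have "{\<omega> \<in> space M. (X \<omega>, Y \<omega>) \<in> S} = (\<lambda>\<omega>. (X \<omega>, Y \<omega>)) -` S \<inter> space M" by auto
  also have "emeasure M \<dots> = (\<integral>\<^sup>+p. (case p of (x, y) \<Rightarrow> f x * g y) * indicator S p \<partial>(lborel \<Otimes>\<^sub>M lborel))"
    by (rule distributed_emeasure[OF XY]) measurable
  also have "\<dots> = (\<integral>\<^sup>+y. \<integral>\<^sup>+x. f x * g y * indicator S (x, y) \<partial>lborel \<partial>lborel)"
    by (subst lborel_pair.nn_integral_snd[symmetric]) simp_all
  also have "\<dots> = (\<integral>\<^sup>+y. g y * (\<integral>\<^sup>+x. f x * indicator S (x, y) \<partial>lborel) \<partial>lborel)"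
    by (subst nn_integral_cmult[symmetric]) (auto simp: ac_simps intro!: nn_integral_cong)
  finally show ?thesis .
qed

lemma nn_integral_erlang_density_R_rd_ge:
  fixes y P_s P_r C r l :: real
  assumes l: "0 < l" and y: "0 \<le> y"
    and P: "0 < P_s" "0 < P_r" and C: "0 \<le> C" "C < 1" and r: "0 < r"
  defines "\<beta> \<equiv> l * Psi r C / (P_r * (1 - C^2))"
  shows "(\<integral>\<^sup>+x. ennreal (erlang_density k l x) * indicator {p. \<not> R_rd P_s P_r C (fst p) (snd p) < r} (x, y) \<partial>lborel)
       = poisson_cdf k (\<beta> * (P_s * y + 1))"
proof -
  define T where "T = (P_s * y + 1) * Psi r C / (P_r * (1 - C^2))"
  have "C^2 < 1" using C by (simp add: power_less_one_iff abs_square_less_1)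
  then have T: "0 \<le> T"
    using Psi_pos[OF r C] P y by (simp add: T_def add_nonneg_pos)
  have "(\<integral>\<^sup>+x. ennreal (erlang_density k l x) * indicator {p. \<not> R_rd P_s P_r C (fst p) (snd p) < r} (x, y) \<partial>lborel)
      = (\<integral>\<^sup>+x. ennreal (erlang_density k l x) * indicator {T..} x \<partial>lborel)"
  proof (intro nn_integral_cong)
    fix x :: real
    show "ennreal (erlang_density k l x) * indicator {p. \<not> R_rd P_s P_r C (fst p) (snd p) < r} (x, y)
        = ennreal (erlang_density k l x) * indicator {T..} x"
      using R_rd_less_iff[of x y, OF _ y P C r]
      by (cases "x < 0") (auto simp: erlang_density_def T_def split: split_indicator)
  qed
  also have "\<dots> = poisson_cdf k (l * T)"
    by (rule nn_integral_erlang_density_atLeast[OF l T])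
  finally show ?thesis
    by (simp add: T_def \<beta>_def mult_ac)
qed

lemma (in prob_space) prob_R_rd_less_erlang:
  fixes X Y :: "'a \<Rightarrow> real" and P_s P_r C r l1 l2 :: real
  assumes X: "distributed M lborel X (erlang_density k1 l1)"
    and Y: "distributed M lborel Y (erlang_density k2 l2)"
    and indep: "indep_var borel X borel Y"
    and l: "0 < l1" "0 < l2"
    and P: "0 < P_s" "0 < P_r" and C: "0 \<le> C" "C < 1" and r: "0 < r"
  defines "\<beta> \<equiv> l1 * Psi r C / (P_r * (1 - C^2))"
  shows "prob {\<omega> \<in> space M. R_rd P_s P_r C (X \<omega>) (Y \<omega>) < r}
       = 1 - exp (- \<beta>) * l2^Suc k2 / fact k2 *
           (\<Sum>m\<le>k1. \<Sum>j\<le>m. real (m choose j) * P_s^j * fact (k2 + j) * \<beta>^m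
              / (fact m * (P_s * \<beta> + l2)^(j + Suc k2)))"
    (is "prob ?E = 1 - ?V")
proof -
  define S where "S = {p :: real \<times> real. \<not> R_rd P_s P_r C (fst p) (snd p) < r}"
  have "Measurable.pred (borel \<Otimes>\<^sub>M borel) (\<lambda>p :: real \<times> real. \<not> R_rd P_s P_r C (fst p) (snd p) < r)"
    unfolding R_rd_def by measurable
  then have S_sets: "S \<in> sets (borel \<Otimes>\<^sub>M borel)"
    unfolding S_def pred_def by (simp add: space_pair_measure)
  have "C^2 < 1" using C by (simp add: power_less_one_iff abs_square_less_1)
  then have \<beta>: "0 \<le> \<beta>" using Psi_pos[OF r C] l P by (simp add: \<beta>_def)
  have "emeasure M {\<omega> \<in> space M. (X \<omega>, Y \<omega>) \<in> S}
      = (\<integral>\<^sup>+y. ennreal (erlang_density k2 l2 y) *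
           (\<integral>\<^sup>+x. ennreal (erlang_density k1 l1 x) * indicator S (x, y) \<partial>lborel) \<partial>lborel)"
    by (rule emeasure_indep_distributed_pair[OF X Y indep S_sets])
  also have "\<dots> = (\<integral>\<^sup>+y. ennreal (erlang_density k2 l2 y * poisson_cdf k1 (\<beta> * (P_s * y + 1))) \<partial>lborel)"
  proof (intro nn_integral_cong)
    fix y :: real
    show "ennreal (erlang_density k2 l2 y) * (\<integral>\<^sup>+x. ennreal (erlang_density k1 l1 x) * indicator S (x, y) \<partial>lborel)
        = ennreal (erlang_density k2 l2 y * poisson_cdf k1 (\<beta> * (P_s * y + 1)))"
    proof (cases "y < 0")
      case False
      then have "0 \<le> \<beta> * (P_s * y + 1)" using \<beta> P by simp
      with False show ?thesis
        using nn_integral_erlang_density_R_rd_ge[OF l(1) _ P C r, of y k1] l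
        by (simp add: S_def \<beta>_def ennreal_mult poisson_cdf_nonneg)
    qed (simp add: erlang_density_def)
  qed
  also have "\<dots> = ennreal ?V"
    using P by (intro nn_integral_erlang_density_poisson_cdf[OF l(2) \<beta>]) simp
  finally have "emeasure M {\<omega> \<in> space M. (X \<omega>, Y \<omega>) \<in> S} = ennreal ?V" .
  moreover have "0 \<le> ?V"
    using \<beta> l P by (intro mult_nonneg_nonneg sum_nonneg divide_nonneg_nonneg) auto
  moreover have "{\<omega> \<in> space M. (X \<omega>, Y \<omega>) \<in> S} = space M - ?E"
    by (auto simp: S_def)
  moreover have "?E \<in> events"
  proof -
    have "(\<lambda>\<omega>. (X \<omega>, Y \<omega>)) \<in> measurable M (borel \<Otimes>\<^sub>M borel)"
      using X Y by (intro measurable_Pair) (auto simp: distributed_def)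
    from measurable_sets[OF this sets.compl_sets[OF S_sets]]
    show ?thesis by (simp add: S_def space_pair_measure set_diff_eq vimage_def Int_def conj_commute)
  qed
  ultimately show ?thesis
    by (simp add: prob_compl emeasure_eq_measure)
qed

theorem theorem1:
  fixes M :: "'a measure" and G_rd G_sd :: "'a \<Rightarrow> real"
    and m_rd m_sd :: nat and pi_rd pi_sd P_s P_r C_x r :: real
  assumes "prob_space M"
    and "m_rd \<ge> 1" and "m_sd \<ge> 1" and "pi_rd > 0" and "pi_sd > 0"
    and "P_s > 0"
    and "distributed M lborel G_rd (gamma_density m_rd (pi_rd / real m_rd))"
    and "distributed M lborel G_sd (gamma_density m_sd (pi_sd / real m_sd))"
    and "prob_space.indep_var M borel G_rd borel G_sd"
    and "r > 0" and "P_r > 0" and "0 \<le> C_x" and "C_x < 1"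
  shows
    "let \<theta>_rd = pi_rd / real m_rd; \<theta>_sd = pi_sd / real m_sd;
         \<beta> = Psi r C_x / (P_r * \<theta>_rd * (1 - C_x^2))
     in measure M {\<omega> \<in> space M. R_rd P_s P_r C_x (G_rd \<omega>) (G_sd \<omega>) < r}
        = 1 - exp (- \<beta>) / (Gamma (real m_sd) * \<theta>_sd ^ m_sd) *
            (\<Sum>m<m_rd. \<Sum>k\<le>m. real (m choose k) * P_s ^ k * Gamma (real (k + m_sd)) * \<beta> ^ m
               / (Gamma (real (m + 1)) * (P_s * \<beta> + 1 / \<theta>_sd) ^ (k + m_sd)))"
proof -
  interpret prob_space M by fact
  obtain k1 k2 where k: "m_rd = Suc k1" "m_sd = Suc k2"
    using assms(2,3) by (metis Suc_pred' less_eq_Suc_le One_nat_def)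
  define \<theta>_rd where "\<theta>_rd = pi_rd / real m_rd"
  define \<theta>_sd where "\<theta>_sd = pi_sd / real m_sd"
  define \<beta> where "\<beta> = Psi r C_x / (P_r * \<theta>_rd * (1 - C_x^2))"
  have \<theta>: "0 < \<theta>_rd" "0 < \<theta>_sd" using assms k by (simp_all add: \<theta>_rd_def \<theta>_sd_def)
  have erlang: "distributed M lborel G_rd (erlang_density k1 (1 / \<theta>_rd))"
    "distributed M lborel G_sd (erlang_density k2 (1 / \<theta>_sd))"
    using assms(7,8) by (simp_all add: k \<theta>_rd_def \<theta>_sd_def gamma_density_eq_erlang_density)
  have \<beta>_eq: "1 / \<theta>_rd * Psi r C_x / (P_r * (1 - C_x^2)) = \<beta>"
    by (simp add: \<beta>_def)
  have Gamma_eq_fact: "Gamma (real (j + m_sd)) = fact (k2 + j)" "Gamma (real (j + 1)) = fact j" for j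
    using Gamma_real_Suc[of "k2 + j"] Gamma_real_Suc[of j] by (simp_all add: k add.commute)
  have "measure M {\<omega> \<in> space M. R_rd P_s P_r C_x (G_rd \<omega>) (G_sd \<omega>) < r}
      = 1 - exp (- \<beta>) * (1 / \<theta>_sd)^Suc k2 / fact k2 *
          (\<Sum>m\<le>k1. \<Sum>j\<le>m. real (m choose j) * P_s^j * fact (k2 + j) * \<beta>^m
             / (fact m * (P_s * \<beta> + 1 / \<theta>_sd)^(j + Suc k2)))"
    using prob_R_rd_less_erlang[OF erlang assms(9) _ _ assms(6,11,12,13,10)] \<theta>
    unfolding \<beta>_eq by simp
  then show ?thesis
    unfolding Let_def \<theta>_rd_def[symmetric] \<theta>_sd_def[symmetric] \<beta>_def[symmetric] Gamma_eq_fact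
    by (simp add: k lessThan_Suc_atMost power_divide Gamma_fact ac_simps)
qed

end
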